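(* Let $s>0$, $x_0>0$, and let $P:[0,\infty)\to\mathbb{R}$ be a $\mathcal{C}^2$, strictly increasing function with $P(0)=0$, $P(x)>0$ for $x>0$, satisfying $\int_{x_0}^{\infty}P(z)z^{-1-2/s}\,dz<\infty$. Let $\gamma_c(x)=\frac{\sqrt{1+4P(x)}-1}{2}$ and consider the solution of \[ \frac{d\gamma_1}{dx}=\frac{\gamma_1(x)+\gamma_1(x)^2-P(x)}{s\,x\,\gamma_1(x)},\qquad \gamma_1(x_0)=\gamma_0, \] with $0<\gamma_0<\gamma_c(x_0)$. Then there is a finite $x_1>x_0$ such that $\gamma_1(x_1)=0$, i.e. the positive solution on $[x_0,\infty)$ ceases to exist at $x_1$ with $\gamma_1(x)\to0$ as $x\to x_1^-$.
   Context: Solutions are taken in the region $x>0$, $\gamma_1>0$ where the right-hand side is regular, as the unique maximal such solution. *)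

theory Defs
  imports "HOL-Analysis.Analysis"
begin

definition C2_on_nonneg :: "(real \<Rightarrow> real) \<Rightarrow> bool" where
  "C2_on_nonneg P \<longleftrightarrow> (\<exists>P' P''.
     (\<forall>x\<in>{0..}. (P has_real_derivative P' x) (at x within {0..})) \<and>
     (\<forall>x\<in>{0..}. (P' has_real_derivative P'' x) (at x within {0..})) \<and>
     continuous_on {0..} P'')"

definition gamma_c :: "(real \<Rightarrow> real) \<Rightarrow> real \<Rightarrow> real" where
  "gamma_c P x = (sqrt (1 + 4 * P x) - 1) / 2"

definition pos_solution ::
  "real \<Rightarrow> (real \<Rightarrow> real) \<Rightarrow> real \<Rightarrow> real \<Rightarrow> (real \<Rightarrow> real) \<Rightarrow> real \<Rightarrow> bool" where
  "pos_solution s P x0 gamma0 g b \<longleftrightarrow>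
     x0 < b \<and> g x0 = gamma0 \<and>
     (\<forall>x\<in>{x0..<b}. g x > 0 \<and>
        (g has_real_derivative (g x + (g x)\<^sup>2 - P x) / (s * x * g x)) (at x within {x0..<b}))"

end

theory Submission
  imports Defs
begin

(* Exchanging the roles of the variables makes the problem regular: with t = gamma0 - gamma1 as
   the independent variable and y = ln x as the unknown, the equation reads
   y' = s (gamma0 - t) / (P (e^y) - (gamma0 - t) - (gamma0 - t)^2).
   Since P increases and gamma0 + gamma0^2 < P x0, the denominator stays above
   P x0 - gamma0 - gamma0^2 > 0 for t in [0, gamma0], so by Picard-Lindeloef this equation has a
   solution on all of [0, gamma0], and it is strictly increasing. Inverting x = e^(y t) yields a
   positive solution gamma1 = gamma0 - t(x) on [x0, x1), x1 = e^(y gamma0), which tends to 0 at x1.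
   Positive solutions are unique by a Gronwall estimate, so none of them extends beyond x1. *)

section \<open>Picard iteration\<close>

lemma has_integral_monomial:
  fixes c t :: real
  assumes "0 \<le> t"
  shows "((\<lambda>x. c * x ^ k) has_integral c * t ^ Suc k / Suc k) {0..t}"
proof -
  have "((\<lambda>x. c * x ^ Suc k / Suc k) has_vector_derivative c * x ^ k) (at x within {0..t})" for x
    unfolding has_real_derivative_iff_has_vector_derivative[symmetric]
    by (rule derivative_eq_intros refl | simp)+
  then have "((\<lambda>x. c * x ^ k) has_integral
          (\<lambda>x. c * x ^ Suc k / Suc k) t - (\<lambda>x. c * x ^ Suc k / Suc k) 0) {0..t}"
    by (intro fundamental_theorem_of_calculus[OF assms])
  then show ?thesis by simp
qed

primrec picard_iterate :: "(real \<Rightarrow> real \<Rightarrow> real) \<Rightarrow> real \<Rightarrow> nat \<Rightarrow> real \<Rightarrow> real" where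
  "picard_iterate f y0 0 = (\<lambda>t. y0)"
| "picard_iterate f y0 (Suc n) = (\<lambda>t. y0 + integral {0..t} (\<lambda>\<tau>. f \<tau> (picard_iterate f y0 n \<tau>)))"

context
  fixes f :: "real \<Rightarrow> real \<Rightarrow> real" and a L B :: real
  assumes a_nonneg: "0 \<le> a" and L_nonneg: "0 \<le> L"
    and continuous_rhs: "\<And>u. continuous_on {0..a} u \<Longrightarrow> continuous_on {0..a} (\<lambda>t. f t (u t))"
    and lipschitz_rhs: "\<And>t y z. t \<in> {0..a} \<Longrightarrow> \<bar>f t y - f t z\<bar> \<le> L * \<bar>y - z\<bar>"
    and bounded_rhs: "\<And>t y. t \<in> {0..a} \<Longrightarrow> \<bar>f t y\<bar> \<le> B"
begin

private lemma integrable_rhs: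
  assumes "continuous_on {0..a} u" "t \<le> a"
  shows "(\<lambda>\<tau>. f \<tau> (u \<tau>)) integrable_on {0..t}"
  using continuous_rhs[OF assms(1)] assms(2)
  by (metis atLeastatMost_subset_iff continuous_on_subset integrable_continuous_real order_refl)

lemma continuous_on_picard_iterate: "continuous_on {0..a} (picard_iterate f y0 n)"
proof (induction n)
  case (Suc n)
  have "continuous_on {0..a} (\<lambda>t. integral {0..t} (\<lambda>\<tau>. f \<tau> (picard_iterate f y0 n \<tau>)))"
    by (rule indefinite_integral_continuous_1) (rule integrable_rhs[OF Suc order_refl])
  then show ?case by (auto intro: continuous_intros)
qed simp

lemma picard_iterate_step_le:
  assumes "t \<in> {0..a}"
  shows "\<bar>picard_iterate f y0 (Suc n) t - picard_iterate f y0 n t\<bar> \<le> B * L ^ n * t ^ Suc n / fact (Suc n)"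
  using assms
proof (induction n arbitrary: t)
  case 0
  have "norm (integral {0..t} (\<lambda>\<tau>. f \<tau> y0)) \<le> integral {0..t} (\<lambda>\<tau>. B)"
    using integrable_rhs[of "\<lambda>_. y0" t] 0 bounded_rhs
    by (intro integral_norm_bound_integral) auto
  then show ?case using 0 by (simp add: mult.commute)
next
  case (Suc n)
  let ?it = "picard_iterate f y0" and ?c = "L * (B * L ^ n / fact (Suc n))"
  have int: "(\<lambda>\<tau>. f \<tau> (?it m \<tau>)) integrable_on {0..t}" for m
    using Suc.prems by (intro integrable_rhs continuous_on_picard_iterate) auto
  have at_t: "?it (Suc m) t = y0 + integral {0..t} (\<lambda>\<tau>. f \<tau> (?it m \<tau>))" for m
    by simp
  have "\<bar>?it (Suc (Suc n)) t - ?it (Suc n) t\<bar>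
      = norm (integral {0..t} (\<lambda>\<tau>. f \<tau> (?it (Suc n) \<tau>) - f \<tau> (?it n \<tau>)))"
    by (simp only: at_t integral_diff[OF int int] real_norm_def)
  also have "\<dots> \<le> integral {0..t} (\<lambda>\<tau>. ?c * \<tau> ^ Suc n)"
  proof (rule integral_norm_bound_integral)
    show "(\<lambda>\<tau>. f \<tau> (?it (Suc n) \<tau>) - f \<tau> (?it n \<tau>)) integrable_on {0..t}"
      by (rule integrable_diff[OF int int])
    show "(\<lambda>\<tau>. ?c * \<tau> ^ Suc n) integrable_on {0..t}"
      using has_integral_monomial[of t ?c "Suc n"] Suc.prems by auto
    fix x assume "x \<in> {0..t}"
    then have x: "x \<in> {0..a}" using Suc.prems by auto
    have "\<bar>f x (?it (Suc n) x) - f x (?it n x)\<bar> \<le> L * \<bar>?it (Suc n) x - ?it n x\<bar>"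
      by (rule lipschitz_rhs[OF x])
    also have "\<dots> \<le> L * (B * L ^ n * x ^ Suc n / fact (Suc n))"
      by (rule mult_left_mono[OF Suc.IH[OF x] L_nonneg])
    finally show "norm (f x (?it (Suc n) x) - f x (?it n x)) \<le> ?c * x ^ Suc n"
      by simp
  qed
  also have "\<dots> = ?c * t ^ Suc (Suc n) / Suc (Suc n)"
    using has_integral_monomial[of t ?c "Suc n"] Suc.prems by (intro integral_unique) auto
  also have "\<dots> = B * L ^ Suc n * t ^ Suc (Suc n) / fact (Suc (Suc n))"
    by (simp add: field_simps)
  finally show ?case .
qed

text \<open>The steps are dominated by the terms of the exponential series of \<open>L a\<close>, so
  the telescoping series converges uniformly by the Weierstrass test.\<close>
lemma uniform_limit_picard_iterate:
  obtains u where "uniform_limit {0..a} (picard_iterate f y0) u sequentially"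
proof -
  let ?it = "picard_iterate f y0"
  define M where "M n = B * a * ((L * a) ^ n / fact (Suc n))" for n
  have B: "0 \<le> B" using bounded_rhs[of 0 0] a_nonneg by auto
  have step_le_M: "norm (?it (Suc n) t - ?it n t) \<le> M n" if "t \<in> {0..a}" for n t
  proof -
    have "B * L ^ n * t ^ Suc n \<le> B * L ^ n * a ^ Suc n"
      using that B L_nonneg by (intro mult_left_mono power_mono) auto
    then have "B * L ^ n * t ^ Suc n / fact (Suc n) \<le> M n"
      by (simp add: M_def power_mult_distrib divide_right_mono mult_ac)
    with picard_iterate_step_le[OF that] show ?thesis
      unfolding real_norm_def by (rule order_trans)
  qed
  have "summable M"
  proof (rule summable_comparison_test')
    show "summable (\<lambda>n. B * a * (inverse (fact n) * (L * a) ^ n))"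
      by (intro summable_mult summable_exp)
    fix n
    have "M n \<le> B * a * ((L * a) ^ n / fact n)"
      unfolding M_def using B a_nonneg L_nonneg
      by (intro mult_left_mono divide_left_mono) (auto simp: fact_mono)
    then show "norm (M n) \<le> B * a * (inverse (fact n) * (L * a) ^ n)"
      using B a_nonneg L_nonneg by (simp add: M_def field_simps)
  qed
  with step_le_M have "uniform_limit {0..a} (\<lambda>n t. \<Sum>i<n. ?it (Suc i) t - ?it i t)
      (\<lambda>t. \<Sum>i. ?it (Suc i) t - ?it i t) sequentially"
    by (rule Weierstrass_m_test)
  then have "uniform_limit {0..a} (\<lambda>n t. y0 + (\<Sum>i<n. ?it (Suc i) t - ?it i t))
      (\<lambda>t. y0 + (\<Sum>i. ?it (Suc i) t - ?it i t)) sequentially"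
    by (intro uniform_limit_intros)
  moreover have "y0 + (\<Sum>i<n. ?it (Suc i) t - ?it i t) = ?it n t" for n t
    by (subst sum_lessThan_telescope) simp
  ultimately have "uniform_limit {0..a} ?it (\<lambda>t. y0 + (\<Sum>i. ?it (Suc i) t - ?it i t)) sequentially"
    by simp
  then show ?thesis by (rule that)
qed

lemma picard_lindelof_global:
  obtains u where "u 0 = y0"
    "\<And>t. t \<in> {0..a} \<Longrightarrow> (u has_real_derivative f t (u t)) (at t within {0..a})"
proof -
  let ?it = "picard_iterate f y0"
  obtain u where lim: "uniform_limit {0..a} ?it u sequentially"
    using uniform_limit_picard_iterate .
  have cont: "continuous_on {0..a} u"
    by (rule uniform_limit_theorem[OF _ lim]) (auto simp: continuous_on_picard_iterate)
  have integral_eq: "u t = y0 + integral {0..t} (\<lambda>\<tau>. f \<tau> (u \<tau>))" if t: "t \<in> {0..a}" for t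
  proof -
    have sub: "{0..t} \<subseteq> {0..a}" using t by auto
    have "uniform_limit {0..t} (\<lambda>n \<tau>. L * ?it n \<tau>) (\<lambda>\<tau>. L * u \<tau>) sequentially"
      by (intro uniform_limit_intros uniform_limit_on_subset[OF lim sub])
    then have "uniform_limit {0..t} (\<lambda>n \<tau>. f \<tau> (?it n \<tau>)) (\<lambda>\<tau>. f \<tau> (u \<tau>)) sequentially"
      by (rule metric_uniform_limit_imp_uniform_limit, intro always_eventually ballI)
        (use sub lipschitz_rhs L_nonneg in \<open>auto simp: dist_real_def abs_mult
          simp flip: right_diff_distrib\<close>)
    then obtain I J where I: "\<And>n. ((\<lambda>\<tau>. f \<tau> (?it n \<tau>)) has_integral I n) {0..t}"
      and J: "((\<lambda>\<tau>. f \<tau> (u \<tau>)) has_integral J) {0..t}" and "I \<longlonglongrightarrow> J"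
      by (rule uniform_limit_integral)
        (use sub continuous_on_subset[OF continuous_rhs[OF continuous_on_picard_iterate]] in auto)
    then have "(\<lambda>n. ?it (Suc n) t) \<longlonglongrightarrow> y0 + integral {0..t} (\<lambda>\<tau>. f \<tau> (u \<tau>))"
      by (simp add: integral_unique[OF I] integral_unique[OF J] tendsto_add)
    with LIMSEQ_Suc[OF tendsto_uniform_limitI[OF lim t]] show ?thesis by (rule LIMSEQ_unique)
  qed
  show ?thesis
  proof
    show "u 0 = y0" using integral_eq[of 0] a_nonneg by simp
    show "(u has_real_derivative f t (u t)) (at t within {0..a})" if t: "t \<in> {0..a}" for t
    proof (rule has_field_derivative_transform_within[where d=1])
      show "((\<lambda>x. y0 + integral {0..x} (\<lambda>\<tau>. f \<tau> (u \<tau>))) has_real_derivative f t (u t))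
          (at t within {0..a})"
        using integral_has_real_derivative[OF continuous_rhs[OF cont] t]
        by (auto intro!: derivative_eq_intros)
    qed (use t integral_eq in auto)
  qed
qed

end

section \<open>Monotone functions and their inverses\<close>

lemma le_if_deriv_nonneg_on_Icc:
  fixes f f' :: "real \<Rightarrow> real"
  assumes "a \<le> b"
    and "\<And>x. x \<in> {a..b} \<Longrightarrow> (f has_real_derivative f' x) (at x within {a..b})"
    and "\<And>x. x \<in> {a..b} \<Longrightarrow> f' x \<ge> 0"
  shows "f a \<le> f b"
proof -
  obtain x where "x \<in> {a..b}" "f b - f a = f' x * (b - a)"
    using mvt_very_simple[OF assms(1), of f "\<lambda>x. (*) (f' x)"] assms(2)
    unfolding has_field_derivative_def by auto
  moreover from this have "0 \<le> f' x * (b - a)"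
    using assms(1) assms(3)[of x] by (intro mult_nonneg_nonneg) auto
  ultimately show ?thesis by linarith
qed

lemma less_if_deriv_pos_on_Icc:
  fixes f f' :: "real \<Rightarrow> real"
  assumes "a < b"
    and "\<And>x. x \<in> {a..b} \<Longrightarrow> (f has_real_derivative f' x) (at x within {a..b})"
    and "\<And>x. x \<in> {a<..<b} \<Longrightarrow> f' x > 0"
  shows "f a < f b"
proof -
  obtain x where "x \<in> {a<..<b}" "f b - f a = f' x * (b - a)"
    using mvt_simple[OF assms(1), of f "\<lambda>x. (*) (f' x)"] assms(2)
    unfolding has_field_derivative_def by auto
  moreover from this have "0 < f' x * (b - a)"
    using assms(1) assms(3)[of x] by (intro mult_pos_pos) auto
  ultimately show ?thesis by linarith
qed

lemma has_real_derivative_inverse_within: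
  fixes f g :: "real \<Rightarrow> real"
  assumes "(f has_real_derivative D) (at x within S)" "D \<noteq> 0" "x \<in> S"
    and "continuous (at (f x) within f ` S) g" "\<And>z. z \<in> S \<Longrightarrow> g (f z) = z"
  shows "(g has_real_derivative inverse D) (at (f x) within f ` S)"
  unfolding has_field_derivative_def
  by (rule has_derivative_inverse_within[OF assms(1)[unfolded has_field_derivative_def]])
    (use assms in \<open>auto simp: fun_eq_iff\<close>)

lemma increasing_on_Icc_inverse:
  fixes X X' :: "real \<Rightarrow> real"
  assumes "a < b"
    and deriv: "\<And>t. t \<in> {a..b} \<Longrightarrow> (X has_real_derivative X' t) (at t within {a..b})"
    and pos: "\<And>t. t \<in> {a..<b} \<Longrightarrow> X' t > 0"
  obtains T where "X a < X b"
    "\<And>x. x \<in> {X a..X b} \<Longrightarrow> T x \<in> {a..b} \<and> X (T x) = x"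
    "\<And>t. t \<in> {a..b} \<Longrightarrow> T (X t) = t"
    "continuous_on {X a..X b} T"
    "\<And>x. x \<in> {X a..<X b} \<Longrightarrow> (T has_real_derivative inverse (X' (T x))) (at x within {X a..X b})"
proof -
  have cont: "continuous_on {a..b} X"
    using deriv by (rule DERIV_continuous_on)
  have less: "X t1 < X t2" if "a \<le> t1" "t1 < t2" "t2 \<le> b" for t1 t2
    using that
    by (intro less_if_deriv_pos_on_Icc[of t1 t2 X X'] has_field_derivative_subset[OF deriv] pos)
      auto
  then have inj: "inj_on X {a..b}"
    by (intro inj_onI) (metis atLeastAtMost_iff linorder_neqE_linordered_idom less_irrefl)
  have image: "X ` {a..b} = {X a..X b}"
  proof
    show "X ` {a..b} \<subseteq> {X a..X b}"
      using less \<open>a < b\<close> by (force simp: le_less)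
    show "{X a..X b} \<subseteq> X ` {a..b}"
      using IVT'[of X a _ b] cont \<open>a < b\<close> by (force simp: image_iff)
  qed
  define T where "T = inv_into {a..b} X"
  have T_X: "T (X t) = t" if "t \<in> {a..b}" for t
    using inv_into_f_f[OF inj that] by (simp add: T_def)
  have X_T: "T x \<in> {a..b} \<and> X (T x) = x" if "x \<in> {X a..X b}" for x
    using that image f_inv_into_f[of x X "{a..b}"] inv_into_into[of x X "{a..b}"]
    by (auto simp: T_def)
  have T_cont: "continuous_on {X a..X b} T"
    using continuous_on_inv[OF cont compact_Icc, of T] T_X image by auto
  show ?thesis
  proof (rule that[OF less[OF order_refl \<open>a < b\<close> order_refl] X_T T_X T_cont])
    fix x assume x: "x \<in> {X a..<X b}"
    then have t: "T x \<in> {a..b}" and XT: "X (T x) = x" using X_T by auto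
    then have "T x \<noteq> b" using x by auto
    with t have "X' (T x) \<noteq> 0" using pos[of "T x"] by auto
    moreover have "continuous (at (X (T x)) within X ` {a..b}) T"
      using T_cont x XT image by (auto simp: continuous_on_eq_continuous_within)
    ultimately have "(T has_real_derivative inverse (X' (T x))) (at (X (T x)) within X ` {a..b})"
      using t T_X by (intro has_real_derivative_inverse_within deriv)
    then show "(T has_real_derivative inverse (X' (T x))) (at x within {X a..X b})"
      by (simp add: XT image)
  qed
qed

section \<open>Uniqueness of positive solutions\<close>

text \<open>Gronwall-type argument: \<open>(h - g)\<^sup>2 e\<^sup>-\<^sup>2\<^sup>K\<^sup>x\<close> is non-increasing.\<close>
lemma eq_if_one_sided_lipschitz:
  fixes g h g' h' :: "real \<Rightarrow> real"
  assumes "a \<le> b" "g a = h a"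
    and g: "\<And>x. x \<in> {a..b} \<Longrightarrow> (g has_real_derivative g' x) (at x within {a..b})"
    and h: "\<And>x. x \<in> {a..b} \<Longrightarrow> (h has_real_derivative h' x) (at x within {a..b})"
    and gap: "\<And>x. x \<in> {a..b} \<Longrightarrow> (h' x - g' x) * (h x - g x) \<le> K * (h x - g x)\<^sup>2"
  shows "h b = g b"
proof -
  define w where "w x = (h x - g x)\<^sup>2 * exp (- 2 * K * x)" for x
  define w' where "w' x = 2 * exp (- 2 * K * x) * ((h' x - g' x) * (h x - g x) - K * (h x - g x)\<^sup>2)" for x
  have w: "(w has_real_derivative w' x) (at x within {a..b})" if "x \<in> {a..b}" for x
    unfolding w_def w'_def
    by (rule derivative_eq_intros g[OF that] h[OF that] refl | simp add: algebra_simps power2_eq_square)+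
  have "- w a \<le> - w b"
  proof (rule le_if_deriv_nonneg_on_Icc[OF \<open>a \<le> b\<close>])
    show "((\<lambda>x. - w x) has_real_derivative - w' x) (at x within {a..b})" if "x \<in> {a..b}" for x
      using w[OF that] by (rule derivative_intros)
    show "- w' x \<ge> 0" if "x \<in> {a..b}" for x
      using gap[OF that] by (simp add: w'_def mult_nonneg_nonpos)
  qed
  then have "(h b - g b)\<^sup>2 * exp (- 2 * K * b) \<le> 0"
    by (simp add: w_def \<open>g a = h a\<close>)
  then show ?thesis
    by (simp add: mult_le_0_iff)
qed

lemma pos_solutions_agree:
  fixes s x0 gamma0 b c x :: real and P g h :: "real \<Rightarrow> real"
  assumes s: "s > 0" and x0: "x0 > 0" and P: "continuous_on {x0..} P"
    and g: "pos_solution s P x0 gamma0 g b" and h: "pos_solution s P x0 gamma0 h c"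
    and x: "x \<in> {x0..<min b c}"
  shows "h x = g x"
proof -
  let ?S = "{x0..x}"
  have sub: "?S \<subseteq> {x0..<b}" "?S \<subseteq> {x0..<c}" using x by auto
  have g': "g y > 0" "(g has_real_derivative (g y + (g y)\<^sup>2 - P y) / (s * y * g y)) (at y within ?S)"
    and h': "h y > 0" "(h has_real_derivative (h y + (h y)\<^sup>2 - P y) / (s * y * h y)) (at y within ?S)"
    if "y \<in> ?S" for y
    using g h subsetD[OF sub(1) that] subsetD[OF sub(2) that] has_field_derivative_subset[OF _ sub(1)]
      has_field_derivative_subset[OF _ sub(2)]
    unfolding pos_solution_def by blast+
  obtain yg where yg: "yg \<in> ?S" "\<And>y. y \<in> ?S \<Longrightarrow> g yg \<le> g y"
    using continuous_attains_inf[OF compact_Icc _ DERIV_continuous_on[OF g'(2)]] x by auto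
  obtain yh where yh: "yh \<in> ?S" "\<And>y. y \<in> ?S \<Longrightarrow> h yh \<le> h y"
    using continuous_attains_inf[OF compact_Icc _ DERIV_continuous_on[OF h'(2)]] x by auto
  obtain C where C: "\<And>y. y \<in> ?S \<Longrightarrow> \<bar>P y\<bar> \<le> C"
    using compact_imp_bounded[OF compact_continuous_image[OF continuous_on_subset[OF P] compact_Icc]]
    by (force simp: bounded_real)
  then have "C \<ge> 0" using x by force
  define N where "N = 1 + C / (g yg * h yh)"
  have m: "g yg > 0" "h yh > 0" using g'(1)[OF yg(1)] h'(1)[OF yh(1)] .
  show ?thesis
  proof (rule eq_if_one_sided_lipschitz[OF _ _ g'(2) h'(2)])
    show "x0 \<le> x" "g x0 = h x0" using x g h by (auto simp: pos_solution_def)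
    fix y assume y: "y \<in> ?S"
    define c where "c = (1 + P y / (g y * h y)) / (s * y)"
    have gy: "g y > 0" and hy: "h y > 0" and sy: "s * x0 \<le> s * y"
      using g'(1)[OF y] h'(1)[OF y] y s by auto
    have diff: "(h y + (h y)\<^sup>2 - P y) / (s * y * h y) - (g y + (g y)\<^sup>2 - P y) / (s * y * g y)
        = (h y - g y) * c"
      using gy hy s x0 y by (simp add: c_def field_simps power2_eq_square)
    have "g yg * h yh \<le> g y * h y"
      using yg(2)[OF y] yh(2)[OF y] m by (intro mult_mono) auto
    then have "P y / (g y * h y) \<le> C / (g yg * h yh)"
      using C[OF y] \<open>C \<ge> 0\<close> gy hy m
      by (meson abs_le_D1 divide_left_mono divide_right_mono mult_pos_pos order_trans less_imp_le)
    then have "c \<le> N / (s * y)"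
      unfolding c_def using s x0 y by (intro divide_right_mono) (auto simp: N_def)
    also have "\<dots> \<le> N / (s * x0)"
      using sy s x0 \<open>C \<ge> 0\<close> m by (intro divide_left_mono) (auto simp: N_def)
    finally have "c * (h y - g y)\<^sup>2 \<le> N / (s * x0) * (h y - g y)\<^sup>2"
      by (rule mult_right_mono) simp
    then show "((h y + (h y)\<^sup>2 - P y) / (s * y * h y) - (g y + (g y)\<^sup>2 - P y) / (s * y * g y))
        * (h y - g y) \<le> N / (s * x0) * (h y - g y)\<^sup>2"
      unfolding diff by (simp add: power2_eq_square mult_ac)
  qed
qed

lemma pos_solution_maximal:
  fixes s x0 gamma0 x1 b :: real and P g h :: "real \<Rightarrow> real"
  assumes s: "s > 0" and x0: "x0 > 0" and P: "continuous_on {x0..} P"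
    and g: "pos_solution s P x0 gamma0 g x1" and g_lim: "(g \<longlongrightarrow> 0) (at_left x1)"
    and h: "pos_solution s P x0 gamma0 h b"
  shows "b \<le> x1" "\<forall>x\<in>{x0..<b}. h x = g x"
proof -
  show "b \<le> x1"
  proof (rule ccontr)
    assume "\<not> b \<le> x1"
    moreover have "x0 < x1" using g by (simp add: pos_solution_def)
    ultimately have x1: "x1 \<in> {x0..<b}" and sub: "{x0..x1} \<subseteq> {x0..<b}" by auto
    then have "h x1 > 0" and "(h has_real_derivative (h x1 + (h x1)\<^sup>2 - P x1) / (s * x1 * h x1))
        (at x1 within {x0..<b})"
      using h unfolding pos_solution_def by blast+
    then have "continuous (at x1 within {x0..x1}) h"
      using continuous_within_subset[OF DERIV_continuous sub] by blast
    then have "(h \<longlongrightarrow> h x1) (at_left x1)"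
      using at_within_Icc_at_left[OF \<open>x0 < x1\<close>] by (simp add: continuous_within)
    moreover have "\<forall>\<^sub>F x in at_left x1. g x = h x"
      using eventually_at_left_real[OF \<open>x0 < x1\<close>]
    proof eventually_elim
      case (elim x)
      then show ?case using x1 by (intro pos_solutions_agree[OF s x0 P h g]) auto
    qed
    then have "(h \<longlongrightarrow> 0) (at_left x1)"
      by (rule Lim_transform_eventually[OF g_lim])
    ultimately have "h x1 = 0"
      using tendsto_unique trivial_limit_at_left_real by blast
    with \<open>h x1 > 0\<close> show False by simp
  qed
  then show "\<forall>x\<in>{x0..<b}. h x = g x"
    using pos_solutions_agree[OF s x0 P g h] by auto
qed

section \<open>Existence through the inverse equation\<close>

locale subcritical_ode =
  fixes s x0 gamma0 :: real and P :: "real \<Rightarrow> real"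
  assumes s_pos: "s > 0" and x0_pos: "x0 > 0" and gamma0_pos: "gamma0 > 0"
    and subcritical: "gamma0 + gamma0\<^sup>2 < P x0"
    and P_mono: "mono_on {x0..} P"
    and P_lipschitz: "\<And>X. \<exists>L. L-lipschitz_on {x0..X} P"
begin

definition margin :: real where "margin = P x0 - gamma0 - gamma0\<^sup>2"

definition slope_bound :: real where "slope_bound = s * gamma0 / margin"

definition y_max :: real where "y_max = ln x0 + slope_bound * gamma0"

text \<open>\<open>rhs t y\<close> is the right-hand side of the equation for \<open>y = ln x\<close> as a function of
  \<open>t = gamma0 - \<gamma>\<^sub>1\<close>, with \<open>y\<close> clamped to \<open>[ln x0, y_max]\<close>. The clamp makes it globally
  Lipschitz, and it is invisible along the solution, which never leaves that range.\<close>
definition den :: "real \<Rightarrow> real \<Rightarrow> real" where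
  "den t y = P (exp (max (ln x0) (min y_max y))) - (gamma0 - t) - (gamma0 - t)\<^sup>2"

definition rhs :: "real \<Rightarrow> real \<Rightarrow> real" where
  "rhs t y = s * (gamma0 - t) / den t y"

lemma margin_pos: "margin > 0"
  using subcritical by (simp add: margin_def)

lemma slope_bound_nonneg: "slope_bound \<ge> 0"
  using s_pos gamma0_pos margin_pos by (simp add: slope_bound_def)

lemma ln_x0_le_y_max: "ln x0 \<le> y_max"
  using slope_bound_nonneg gamma0_pos by (simp add: y_max_def)

lemma exp_clamp_mem: "exp (max (ln x0) (min y_max y)) \<in> {x0..exp y_max}"
  using ln_x0_le_y_max exp_ln[OF x0_pos] by (metis atLeastAtMost_iff exp_le_cancel_iff max.cobounded1
      max.bounded_iff min.cobounded1)

lemma margin_le_den: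
  assumes "t \<in> {0..gamma0}"
  shows "margin \<le> den t y"
proof -
  have "P x0 \<le> P (exp (max (ln x0) (min y_max y)))"
    using P_mono exp_clamp_mem by (auto intro: mono_onD)
  moreover have "(gamma0 - t)\<^sup>2 \<le> gamma0\<^sup>2"
    using assms by (intro power_mono) auto
  ultimately show ?thesis
    using assms unfolding den_def margin_def atLeastAtMost_iff by linarith
qed

lemma rhs_nonneg: "t \<in> {0..gamma0} \<Longrightarrow> rhs t y \<ge> 0"
  using margin_le_den[of t y] margin_pos s_pos by (simp add: rhs_def)

lemma rhs_pos: "t \<in> {0..<gamma0} \<Longrightarrow> rhs t y > 0"
  using margin_le_den[of t y] margin_pos s_pos by (simp add: rhs_def)

lemma rhs_le_slope_bound: "t \<in> {0..gamma0} \<Longrightarrow> rhs t y \<le> slope_bound"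
  unfolding rhs_def slope_bound_def
  using margin_le_den[of t y] margin_pos s_pos by (intro frac_le) auto

lemma den_lipschitz: obtains K where "K \<ge> 0" "\<And>t a b. \<bar>den t a - den t b\<bar> \<le> K * \<bar>a - b\<bar>"
proof -
  let ?cl = "\<lambda>y. max (ln x0) (min y_max y)"
  obtain LP where LP: "LP-lipschitz_on {x0..exp y_max} P"
    using P_lipschitz by blast
  have exp_lip: "\<bar>exp (?cl a) - exp (?cl b)\<bar> \<le> exp y_max * \<bar>a - b\<bar>" for a b
  proof -
    have "norm (exp (?cl a) - exp (?cl b)) \<le> exp y_max * norm (?cl a - ?cl b)"
      using ln_x0_le_y_max
      by (intro field_differentiable_bound[of "{ln x0..y_max}"]) (auto intro!: derivative_eq_intros)
    also have "\<dots> \<le> exp y_max * \<bar>a - b\<bar>"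
      by (intro mult_left_mono) auto
    finally show ?thesis by simp
  qed
  show ?thesis
  proof
    show "LP * exp y_max \<ge> 0" using lipschitz_on_nonneg[OF LP] by simp
    fix t a b
    have "\<bar>den t a - den t b\<bar> = \<bar>P (exp (?cl a)) - P (exp (?cl b))\<bar>"
      by (simp add: den_def)
    also have "\<dots> \<le> LP * \<bar>exp (?cl a) - exp (?cl b)\<bar>"
      using lipschitz_onD[OF LP exp_clamp_mem exp_clamp_mem] by (simp add: dist_real_def)
    also have "\<dots> \<le> LP * (exp y_max * \<bar>a - b\<bar>)"
      using exp_lip lipschitz_on_nonneg[OF LP] by (intro mult_left_mono) auto
    finally show "\<bar>den t a - den t b\<bar> \<le> LP * exp y_max * \<bar>a - b\<bar>" by simp
  qed
qed

lemma rhs_lipschitz: obtains L where "L \<ge> 0"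
  "\<And>t a b. t \<in> {0..gamma0} \<Longrightarrow> \<bar>rhs t a - rhs t b\<bar> \<le> L * \<bar>a - b\<bar>"
proof -
  obtain K where K: "K \<ge> 0" "\<And>t a b. \<bar>den t a - den t b\<bar> \<le> K * \<bar>a - b\<bar>"
    using den_lipschitz by blast
  show ?thesis
  proof
    show "s * gamma0 * K / margin\<^sup>2 \<ge> 0"
      using s_pos gamma0_pos K(1) by simp
    fix t a b assume t: "t \<in> {0..gamma0}"
    have da: "den t a \<ge> margin" and db: "den t b \<ge> margin"
      using margin_le_den[OF t] by auto
    have "rhs t a - rhs t b = s * (gamma0 - t) * (den t b - den t a) / (den t a * den t b)"
      using da db margin_pos by (simp add: rhs_def field_simps)
    then have "\<bar>rhs t a - rhs t b\<bar> = s * (gamma0 - t) * \<bar>den t b - den t a\<bar> / (den t a * den t b)"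
      using da db margin_pos s_pos t by (simp add: abs_mult abs_divide)
    also have "\<dots> \<le> s * gamma0 * (K * \<bar>a - b\<bar>) / (margin * margin)"
      using s_pos t gamma0_pos K(2)[of t b a] K(1) da db margin_pos
      by (intro frac_le mult_mono) (auto simp: abs_minus_commute)
    also have "\<dots> = s * gamma0 * K / margin\<^sup>2 * \<bar>a - b\<bar>"
      by (simp add: power2_eq_square)
    finally show "\<bar>rhs t a - rhs t b\<bar> \<le> s * gamma0 * K / margin\<^sup>2 * \<bar>a - b\<bar>" .
  qed
qed

lemma continuous_on_rhs:
  assumes "continuous_on {0..gamma0} u"
  shows "continuous_on {0..gamma0} (\<lambda>t. rhs t (u t))"
proof -
  obtain LP where "LP-lipschitz_on {x0..exp y_max} P"
    using P_lipschitz by blast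
  then have "continuous_on {x0..exp y_max} P"
    by (rule lipschitz_on_continuous_on)
  moreover have "continuous_on {0..gamma0} (\<lambda>t. exp (max (ln x0) (min y_max (u t))))"
    by (intro continuous_intros assms)
  ultimately have "continuous_on {0..gamma0} (\<lambda>t. P (exp (max (ln x0) (min y_max (u t)))))"
    by (rule continuous_on_compose2) (auto intro: exp_clamp_mem)
  then have "continuous_on {0..gamma0} (\<lambda>t. den t (u t))"
    unfolding den_def by (intro continuous_intros)
  moreover have "den t (u t) \<noteq> 0" if "t \<in> {0..gamma0}" for t
    using margin_le_den[OF that, of "u t"] margin_pos by linarith
  ultimately show ?thesis
    unfolding rhs_def by (intro continuous_intros) auto
qed

lemma den_eq:
  assumes "y \<in> {ln x0..y_max}"
  shows "den t y = P (exp y) - (gamma0 - t) - (gamma0 - t)\<^sup>2"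
  using assms by (simp add: den_def)

lemma inverse_solution:
  obtains Y where "Y 0 = ln x0"
    "\<And>t. t \<in> {0..gamma0} \<Longrightarrow> Y t \<in> {ln x0..y_max}"
    "\<And>t. t \<in> {0..gamma0} \<Longrightarrow> (Y has_real_derivative rhs t (Y t)) (at t within {0..gamma0})"
proof -
  obtain L where L: "L \<ge> 0" "\<And>t a b. t \<in> {0..gamma0} \<Longrightarrow> \<bar>rhs t a - rhs t b\<bar> \<le> L * \<bar>a - b\<bar>"
    using rhs_lipschitz by blast
  have bound: "\<bar>rhs t y\<bar> \<le> slope_bound" if "t \<in> {0..gamma0}" for t y
    using rhs_nonneg[OF that] rhs_le_slope_bound[OF that] by simp
  from gamma0_pos have "0 \<le> gamma0" by simp
  obtain Y where Y0: "Y 0 = ln x0" and Y':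
    "\<And>t. t \<in> {0..gamma0} \<Longrightarrow> (Y has_real_derivative rhs t (Y t)) (at t within {0..gamma0})"
    using picard_lindelof_global[OF \<open>0 \<le> gamma0\<close> L(1) continuous_on_rhs L(2) bound] by blast
  have range: "Y t \<in> {ln x0..y_max}" if t: "t \<in> {0..gamma0}" for t
  proof -
    have sub: "{0..t} \<subseteq> {0..gamma0}" using t by auto
    have Y'_sub: "(Y has_real_derivative rhs x (Y x)) (at x within {0..t})" if "x \<in> {0..t}" for x
      using has_field_derivative_subset[OF Y' sub] that sub by blast
    have "Y 0 \<le> Y t"
      by (rule le_if_deriv_nonneg_on_Icc[OF _ Y'_sub]) (use t rhs_nonneg sub in auto)
    moreover have "slope_bound * 0 - Y 0 \<le> slope_bound * t - Y t"
    proof (rule le_if_deriv_nonneg_on_Icc[where f = "\<lambda>x. slope_bound * x - Y x"])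
      show "((\<lambda>x. slope_bound * x - Y x) has_real_derivative slope_bound - rhs x (Y x))
          (at x within {0..t})" if "x \<in> {0..t}" for x
        using Y'_sub[OF that] by (auto intro!: derivative_eq_intros)
    qed (use t rhs_le_slope_bound sub in auto)
    moreover have "slope_bound * t \<le> slope_bound * gamma0"
      using t slope_bound_nonneg by (intro mult_left_mono) auto
    ultimately show ?thesis
      using Y0 by (simp add: y_max_def)
  qed
  show ?thesis by (rule that[OF Y0 range Y'])
qed

lemma solution_reaching_zero:
  obtains x1 g where "x0 < x1" "pos_solution s P x0 gamma0 g x1" "continuous_on {x0..x1} g" "g x1 = 0"
proof -
  obtain Y where Y0: "Y 0 = ln x0" and Y_range: "\<And>t. t \<in> {0..gamma0} \<Longrightarrow> Y t \<in> {ln x0..y_max}"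
    and Y': "\<And>t. t \<in> {0..gamma0} \<Longrightarrow> (Y has_real_derivative rhs t (Y t)) (at t within {0..gamma0})"
    using inverse_solution by blast
  define X where "X t = exp (Y t)" for t
  define X' where "X' t = X t * rhs t (Y t)" for t
  have X': "(X has_real_derivative X' t) (at t within {0..gamma0})" if "t \<in> {0..gamma0}" for t
    unfolding X_def X'_def by (rule derivative_eq_intros Y'[OF that] refl)+
  have "X' t > 0" if "t \<in> {0..<gamma0}" for t
    using rhs_pos[OF that] by (simp add: X'_def X_def)
  then obtain T where "X 0 < X gamma0"
    and XT: "\<And>x. x \<in> {X 0..X gamma0} \<Longrightarrow> T x \<in> {0..gamma0} \<and> X (T x) = x"
    and TX: "\<And>t. t \<in> {0..gamma0} \<Longrightarrow> T (X t) = t"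
    and T_cont: "continuous_on {X 0..X gamma0} T"
    and T': "\<And>x. x \<in> {X 0..<X gamma0} \<Longrightarrow>
               (T has_real_derivative inverse (X' (T x))) (at x within {X 0..X gamma0})"
    using increasing_on_Icc_inverse[OF gamma0_pos X'] by blast
  define x1 where "x1 = X gamma0"
  define g where "g x = gamma0 - T x" for x
  have X0: "X 0 = x0" using x0_pos by (simp add: X_def Y0)
  have "x0 < x1" using \<open>X 0 < X gamma0\<close> by (simp add: X0 x1_def)
  moreover have "pos_solution s P x0 gamma0 g x1"
    unfolding pos_solution_def
  proof (intro conjI ballI \<open>x0 < x1\<close>)
    show "g x0 = gamma0" using TX[of 0] gamma0_pos by (simp add: g_def flip: X0)
    fix x assume x: "x \<in> {x0..<x1}"
    then have "T x \<in> {0..gamma0}" and XTx: "X (T x) = x"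
      using XT[of x] by (auto simp: X0 x1_def)
    moreover have "T x \<noteq> gamma0" using x XTx by (auto simp: x1_def)
    ultimately have t: "T x \<in> {0..<gamma0}" by auto
    then show gx: "g x > 0" by (simp add: g_def)
    have "x > 0" using x x0_pos by auto
    have "(g has_real_derivative - inverse (X' (T x))) (at x within {x0..x1})"
      unfolding g_def using T'[of x] x by (auto intro!: derivative_eq_intros simp: X0 x1_def)
    moreover have "- inverse (X' (T x)) = (g x + (g x)\<^sup>2 - P x) / (s * x * g x)"
    proof -
      define D where "D = den (T x) (Y (T x))"
      have "exp (Y (T x)) = x" using XTx by (simp add: X_def)
      then have D_eq: "D = P x - g x - (g x)\<^sup>2"
        using den_eq[OF Y_range, of "T x"] t by (simp add: D_def g_def)
      have "margin \<le> D" unfolding D_def using t by (intro margin_le_den) auto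
      with margin_pos have "D > 0" by linarith
      then have "- inverse (X' (T x)) = - (D / (s * x * g x))"
        using XTx by (simp add: X'_def rhs_def D_def g_def)
      also have "\<dots> = (g x + (g x)\<^sup>2 - P x) / (s * x * g x)"
        unfolding D_eq by (simp add: minus_divide_left)
      finally show ?thesis .
    qed
    ultimately show "(g has_real_derivative (g x + (g x)\<^sup>2 - P x) / (s * x * g x)) (at x within {x0..<x1})"
      by (auto intro: has_field_derivative_subset)
  qed
  moreover have "continuous_on {x0..x1} g"
    unfolding g_def using T_cont by (intro continuous_intros) (simp add: X0 x1_def)
  moreover have "g x1 = 0" using TX[of gamma0] gamma0_pos by (simp add: g_def x1_def)
  ultimately show thesis by (rule that)
qed

end

lemma add_square_less_if_less_gamma_c:
  assumes "0 \<le> gamma" "gamma < gamma_c P x"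
  shows "gamma + gamma\<^sup>2 < P x"
proof -
  have "2 * gamma + 1 < sqrt (1 + 4 * P x)"
    using assms(2) unfolding gamma_c_def by simp
  then have "(2 * gamma + 1)\<^sup>2 < (sqrt (1 + 4 * P x))\<^sup>2"
    using assms(1) by (intro power_strict_mono) auto
  moreover have "0 < sqrt (1 + 4 * P x)"
    using assms(1) \<open>2 * gamma + 1 < sqrt (1 + 4 * P x)\<close> by linarith
  ultimately show ?thesis
    by (simp add: power2_eq_square algebra_simps)
qed

lemma
  assumes "C2_on_nonneg P"
  shows C2_on_nonneg_continuous_on: "continuous_on {0..} P"
    and C2_on_nonneg_lipschitz_on: "0 \<le> a \<Longrightarrow> \<exists>L. L-lipschitz_on {a..b} P"
proof -
  obtain P' P'' where P': "\<And>x. x \<in> {0..} \<Longrightarrow> (P has_real_derivative P' x) (at x within {0..})"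
    and P'': "\<And>x. x \<in> {0..} \<Longrightarrow> (P' has_real_derivative P'' x) (at x within {0..})"
    using assms unfolding C2_on_nonneg_def by blast
  show "continuous_on {0..} P"
    using P' by (rule DERIV_continuous_on)
  assume "0 \<le> a"
  then have sub: "{a..b} \<subseteq> {0..}" by auto
  have "continuous_on {a..b} P'"
    using continuous_on_subset[OF DERIV_continuous_on[OF P''] sub] .
  then obtain C where "C > 0" and C: "\<And>x. x \<in> {a..b} \<Longrightarrow> \<bar>P' x\<bar> \<le> C"
    using compact_imp_bounded[OF compact_continuous_image[OF _ compact_Icc]]
    by (force simp: bounded_pos)
  have "C-lipschitz_on {a..b} P"
  proof (rule lipschitz_onI)
    show "dist (P x) (P y) \<le> C * dist x y" if "x \<in> {a..b}" "y \<in> {a..b}" for x y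
      using field_differentiable_bound[of "{a..b}" P P' C x y] that C
        has_field_derivative_subset[OF P' sub] sub
      by (auto simp: dist_real_def)
  qed (use \<open>C > 0\<close> in simp)
  then show "\<exists>L. L-lipschitz_on {a..b} P" ..
qed

theorem lemma1:
  fixes s x0 gamma0 :: real and P :: "real \<Rightarrow> real"
  assumes "s > 0" and "x0 > 0"
    and "C2_on_nonneg P"
    and "strict_mono_on {0..} P"
    and "P 0 = 0"
    and "\<And>x. x > 0 \<Longrightarrow> P x > 0"
    and "(\<lambda>z. P z * z powr (-1 - 2 / s)) integrable_on {x0..}"
    and "0 < gamma0" and "gamma0 < gamma_c P x0"
  shows "\<exists>x1 g. x1 > x0 \<and> pos_solution s P x0 gamma0 g x1 \<and>
           (g \<longlongrightarrow> 0) (at_left x1) \<and>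
           (\<forall>h b. pos_solution s P x0 gamma0 h b \<longrightarrow>
                  b \<le> x1 \<and> (\<forall>x\<in>{x0..<b}. h x = g x))"
proof -
  interpret subcritical_ode s x0 gamma0 P
  proof
    show "gamma0 + gamma0\<^sup>2 < P x0"
      using assms(8,9) by (intro add_square_less_if_less_gamma_c) auto
    show "mono_on {x0..} P"
      using strict_mono_on_imp_mono_on[OF assms(4)] by (rule mono_on_subset) (use assms(2) in auto)
    show "\<exists>L. L-lipschitz_on {x0..X} P" for X
      using C2_on_nonneg_lipschitz_on[OF assms(3)] assms(2) by simp
  qed (use assms in auto)
  obtain x1 g where "x0 < x1" and g: "pos_solution s P x0 gamma0 g x1"
    and "continuous_on {x0..x1} g" and "g x1 = 0"
    by (rule solution_reaching_zero)
  then have lim: "(g \<longlongrightarrow> 0) (at_left x1)"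
    using continuous_on_Icc_at_leftD by fastforce
  have "continuous_on {x0..} P"
    using C2_on_nonneg_continuous_on[OF assms(3)] by (rule continuous_on_subset) (use assms(2) in auto)
  with assms(1,2) g lim \<open>x0 < x1\<close> show ?thesis
    using pos_solution_maximal by blast
qed

end
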